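(* Every cubic space $(W,g)$ of dimension at most $\aleph_0$ embeds into the cubic space $V(\infty)$.
   Context: $k$ is algebraically closed of characteristic different from $2,3$. For a vector space with a basis, the dual functionals are called coordinates; $P_n(V)$ is the space of formal, possibly infinite, $k$-linear combinations of degree-$n$ monomials in the coordinates. A cubic space is $(V,f)$ with $f\in P_3(V)$; an embedding $(W,g)\to(V,f)$ is a $k$-linear map $\phi:W\to V$ with $f\circ\phi=g$. The cubic space $V(\infty)$ has coordinates $\{x_i\}_{i\ge1}\cup\{y_{i,j}\}_{i,j\ge1}$ and form $f_\infty=3\sum_{i\ge1}x_iq_i$ with $q_i=\sum_{j\ge1}y_{i,j}^2$. *)

theory Defs
  imports Main "HOL-Library.Multiset" "HOL-Library.Countable_Set"
    "HOL-Computational_Algebra.Polynomial"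
begin

definition alg_closed :: "'k::field itself \<Rightarrow> bool" where
  "alg_closed _ \<longleftrightarrow> (\<forall>p::'k poly. degree p > 0 \<longrightarrow> (\<exists>x. poly p x = 0))"

definition fin_vec :: "'i set \<Rightarrow> ('i \<Rightarrow> 'k::zero) set" where
  "fin_vec I = {v. finite {i. v i \<noteq> 0} \<and> (\<forall>i. i \<notin> I \<longrightarrow> v i = 0)}"

text \<open>An element of P_3(V): a (possibly infinite) family of coefficients of the degree-3
  monomials in the coordinates, a monomial being a multiset of size 3 of basis indices.\<close>
definition cubic_eval :: "('i multiset \<Rightarrow> 'k::comm_ring_1) \<Rightarrow> ('i \<Rightarrow> 'k) \<Rightarrow> 'k" where
  "cubic_eval c v =
     (\<Sum>m \<in> {m. size m = 3 \<and> set_mset m \<subseteq> {i. v i \<noteq> 0}}. c m * (\<Prod>i \<in># m. v i))"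

definition is_linear_between :: "'j set \<Rightarrow> 'i set \<Rightarrow> (('j \<Rightarrow> 'k::field) \<Rightarrow> ('i \<Rightarrow> 'k)) \<Rightarrow> bool" where
  "is_linear_between J I \<phi> \<longleftrightarrow>
     (\<forall>w \<in> fin_vec J. \<phi> w \<in> fin_vec I) \<and>
     (\<forall>w \<in> fin_vec J. \<forall>u \<in> fin_vec J. \<phi> (\<lambda>j. w j + u j) = (\<lambda>i. \<phi> w i + \<phi> u i)) \<and>
     (\<forall>a. \<forall>w \<in> fin_vec J. \<phi> (\<lambda>j. a * w j) = (\<lambda>i. a * \<phi> w i))"

definition cubic_embedding ::
  "'j set \<Rightarrow> ('j multiset \<Rightarrow> 'k::field) \<Rightarrow> 'i set \<Rightarrow> ('i multiset \<Rightarrow> 'k)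
    \<Rightarrow> (('j \<Rightarrow> 'k) \<Rightarrow> ('i \<Rightarrow> 'k)) \<Rightarrow> bool" where
  "cubic_embedding J g I f \<phi> \<longleftrightarrow> is_linear_between J I \<phi> \<and>
     (\<forall>w \<in> fin_vec J. cubic_eval f (\<phi> w) = cubic_eval g w)"

text \<open>V(infinity): coordinates x_i = Inl i, y_{i,j} = Inr (i,j) (indices from 0);
  f_inf = 3 * sum_i x_i * sum_j y_{i,j}^2.\<close>
definition f_inf :: "(nat + nat \<times> nat) multiset \<Rightarrow> 'k::comm_ring_1" where
  "f_inf m = (if \<exists>i j. m = {#Inl i, Inr (i, j), Inr (i, j)#} then 3 else 0)"

end

theory Submission
  imports Defs
begin

(* Enumerate the coordinates of W by the naturals, so that w = (w_0, w_1, ...) and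
   g(w) = sum over a <= b <= c of g_abc w_a w_b w_c = 3 * sum_a w_a * sum_{b >= a} w_b L_ab(w),
   where L_ab(w) = (sum_{c >= b} g_abc w_c) / 3 is a linear form.  Since 2 is invertible and -1
   has a square root i, every product of two linear forms is a sum of two squares of linear forms:
   x y = ((x + y)/2)^2 + (i (x - y)/2)^2.  Taking x_a = w_a and for y_{a,2b}, y_{a,2b+1} the two
   forms writing w_b L_ab(w) (zero when b < a) gives a linear map pulling f_inf back to g. *)

lemma alg_closed_ex_square_root:
  fixes a :: "'k::field"
  assumes "alg_closed TYPE('k)"
  shows "\<exists>x. x * x = a"
proof -
  have "degree [:-a, 0, 1:] > 0" by simp
  then obtain x where "poly [:-a, 0, 1:] x = 0"
    using assms unfolding alg_closed_def by blast
  then show ?thesis by (auto simp: algebra_simps)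
qed

lemma product_eq_sum_of_two_squares:
  fixes x y im :: "'k::field"
  assumes "im * im = -1" and "(2::'k) \<noteq> 0"
  shows "((x + y) / 2)^2 + (im * (x - y) / 2)^2 = x * y"
proof -
  have four: "(4::'k) \<noteq> 0"
    using assms(2) by (metis mult_2_right numeral_Bit0 no_zero_divisors)
  have "(im * (x - y) / 2)^2 = (im * im) * (x - y)^2 / 4"
    by (simp add: power2_eq_square power_divide)
  also have "\<dots> = - ((x - y)^2 / 4)"
    using assms(1) by simp
  finally have "(im * (x - y) / 2)^2 = - ((x - y)^2 / 4)" .
  moreover have "((x + y) / 2)^2 - (x - y)^2 / 4 = ((x + y)^2 - (x - y)^2) / 4"
    by (simp add: power_divide diff_divide_distrib)
  moreover have "(x + y)^2 - (x - y)^2 = 4 * (x * y)"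
    by (simp add: power2_eq_square algebra_simps)
  ultimately show ?thesis
    using four by simp
qed

lemma sum_lessThan_double:
  fixes f :: "nat \<Rightarrow> 'a::comm_monoid_add"
  shows "(\<Sum>j<2 * n. f j) = (\<Sum>b<n. f (2 * b) + f (2 * b + 1))"
  by (induction n) (simp_all add: ac_simps)

lemma sorted_list_of_multiset_triple:
  fixes a b c :: "'a::linorder"
  assumes "a \<le> b" and "b \<le> c"
  shows "sorted_list_of_multiset {#a, b, c#} = [a, b, c]"
proof -
  have "sorted_list_of_multiset {#a, b, c#} = sorted_list_of_multiset (mset [a, b, c])"
    by (simp add: add_mset_commute)
  also have "\<dots> = sort [a, b, c]"
    by (rule sorted_list_of_multiset_mset)
  also have "\<dots> = [a, b, c]"
    using assms by (intro sorted_sort_id) simp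
  finally show ?thesis .
qed

lemma multiset_of_size_3_sorted:
  fixes m :: "'a::linorder multiset"
  assumes "size m = 3"
  obtains a b c where "a \<le> b" "b \<le> c" "m = {#a, b, c#}"
proof -
  define xs where "xs = sorted_list_of_multiset m"
  have "length xs = 3"
    using assms by (metis xs_def mset_sorted_list_of_multiset size_mset)
  then obtain a b c where xs: "xs = [a, b, c]"
    by (auto simp: numeral_3_eq_3 length_Suc_conv)
  have "sorted xs"
    unfolding xs_def by (rule sorted_sorted_list_of_multiset)
  moreover have "mset xs = m"
    unfolding xs_def by (rule mset_sorted_list_of_multiset)
  ultimately show ?thesis
    using that xs by auto
qed

lemma bij_betw_sorted_triples_multisets_of_size:
  fixes A :: "'a::linorder set"
  shows "bij_betw (\<lambda>(a, b, c). {#a, b, c#})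
    {(a, b, c). a \<le> b \<and> b \<le> c \<and> {a, b, c} \<subseteq> A} (multisets_of_size A 3)"
proof (rule bij_betw_imageI)
  show "inj_on (\<lambda>(a, b, c). {#a, b, c#}) {(a, b, c). a \<le> b \<and> b \<le> c \<and> {a, b, c} \<subseteq> A}"
  proof (rule inj_onI)
    fix t t' assume t: "t \<in> {(a, b, c). a \<le> b \<and> b \<le> c \<and> {a, b, c} \<subseteq> A}"
      and t': "t' \<in> {(a, b, c). a \<le> b \<and> b \<le> c \<and> {a, b, c} \<subseteq> A}"
      and eq: "(\<lambda>(a, b, c). {#a, b, c#}) t = (\<lambda>(a, b, c). {#a, b, c#}) t'"
    obtain a b c a' b' c' where "t = (a, b, c)" "t' = (a', b', c')"
      by (cases t, cases t') auto
    with t t' eq have "a \<le> b" "b \<le> c" "a' \<le> b'" "b' \<le> c'" "{#a, b, c#} = {#a', b', c'#}"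
      by auto
    then have "[a, b, c] = [a', b', c']"
      by (metis sorted_list_of_multiset_triple)
    then show "t = t'"
      using \<open>t = (a, b, c)\<close> \<open>t' = (a', b', c')\<close> by simp
  qed
  show "(\<lambda>(a, b, c). {#a, b, c#}) ` {(a, b, c). a \<le> b \<and> b \<le> c \<and> {a, b, c} \<subseteq> A}
      = multisets_of_size A 3"
  proof
    show "multisets_of_size A 3 \<subseteq> (\<lambda>(a, b, c). {#a, b, c#}) `
        {(a, b, c). a \<le> b \<and> b \<le> c \<and> {a, b, c} \<subseteq> A}"
    proof
      fix m assume m: "m \<in> multisets_of_size A 3"
      then obtain a b c where "a \<le> b" "b \<le> c" "m = {#a, b, c#}"
        using multiset_of_size_3_sorted multisets_of_size_size by metis
      moreover have "{a, b, c} \<subseteq> A"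
        using m \<open>m = {#a, b, c#}\<close> by (simp add: multisets_of_size_def)
      ultimately show "m \<in> (\<lambda>(a, b, c). {#a, b, c#}) `
          {(a, b, c). a \<le> b \<and> b \<le> c \<and> {a, b, c} \<subseteq> A}"
        by (auto intro: image_eqI[where x = "(a, b, c)"])
    qed
  qed (auto simp: multisets_of_size_def)
qed

lemma image_mset_inv_into_image_mset:
  assumes "inj_on e J" and "set_mset m \<subseteq> J"
  shows "image_mset (inv_into J e) (image_mset e m) = m"
  unfolding multiset.map_comp
  by (rule multiset.map_ident_strong) (use assms in auto)

lemma image_mset_image_mset_inv_into:
  assumes "set_mset m \<subseteq> e ` J"
  shows "image_mset e (image_mset (inv_into J e) m) = m"
  unfolding multiset.map_comp
  by (rule multiset.map_ident_strong) (use assms in \<open>auto simp: f_inv_into_f\<close>)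

lemma multisets_of_size_image:
  "multisets_of_size (e ` S) n = image_mset e ` multisets_of_size S n"
proof
  show "multisets_of_size (e ` S) n \<subseteq> image_mset e ` multisets_of_size S n"
  proof
    fix m assume m: "m \<in> multisets_of_size (e ` S) n"
    then have "m = image_mset e (image_mset (inv_into S e) m)"
      by (simp add: image_mset_image_mset_inv_into multisets_of_size_def)
    moreover have "image_mset (inv_into S e) m \<in> multisets_of_size S n"
      using m by (auto simp: multisets_of_size_def inv_into_into)
    ultimately show "m \<in> image_mset e ` multisets_of_size S n"
      by blast
  qed
qed (force simp: multisets_of_size_def)

lemma cubic_eval_eq_sum:
  fixes c :: "'i multiset \<Rightarrow> 'k::comm_ring_1"
  assumes "finite {i. v i \<noteq> 0}" and "finite Ms"
    and "\<And>m. m \<in> Ms \<Longrightarrow> size m = 3"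
    and "\<And>m. m \<in> multisets_of_size {i. v i \<noteq> 0} 3 \<Longrightarrow> c m \<noteq> 0 \<Longrightarrow> m \<in> Ms"
  shows "cubic_eval c v = (\<Sum>m\<in>Ms. c m * (\<Prod>i\<in>#m. v i))"
proof -
  let ?D = "multisets_of_size {i. v i \<noteq> 0} 3"
  have "cubic_eval c v = (\<Sum>m\<in>?D. c m * (\<Prod>i\<in>#m. v i))"
    by (simp add: cubic_eval_def multisets_of_size_def conj_commute)
  also have "\<dots> = (\<Sum>m\<in>?D \<inter> Ms. c m * (\<Prod>i\<in>#m. v i))"
  proof (rule sum.mono_neutral_right)
    show "\<forall>m\<in>?D - ?D \<inter> Ms. c m * (\<Prod>i\<in>#m. v i) = 0"
      using assms(4) by (metis DiffE IntI mult_zero_left)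
  qed (use assms(1) in auto)
  also have "\<dots> = (\<Sum>m\<in>Ms. c m * (\<Prod>i\<in>#m. v i))"
  proof (rule sum.mono_neutral_left)
    show "\<forall>m\<in>Ms - ?D \<inter> Ms. c m * (\<Prod>i\<in>#m. v i) = 0"
    proof
      fix m assume "m \<in> Ms - ?D \<inter> Ms"
      then obtain i where "i \<in># m" "v i = 0"
        using assms(3) by (auto simp: multisets_of_size_def)
      then have "0 \<in># image_mset v m"
        by (metis image_eqI set_image_mset)
      then show "c m * (\<Prod>i\<in>#m. v i) = 0"
        by (simp add: prod_mset.remove)
    qed
  qed (use assms(2) in auto)
  finally show ?thesis .
qed

lemma cubic_eval_nat:
  fixes g :: "nat multiset \<Rightarrow> 'k::comm_ring_1"
  assumes "\<And>i. w i \<noteq> 0 \<Longrightarrow> i \<le> N"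
  shows "cubic_eval g w = (\<Sum>a\<le>N. \<Sum>b\<in>{a..N}. \<Sum>c\<in>{b..N}. g {#a, b, c#} * (w a * w b * w c))"
proof -
  have triples: "{(a, b, c). a \<le> b \<and> b \<le> c \<and> {a, b, c} \<subseteq> {..N}}
      = (SIGMA a:{..N}. SIGMA b:{a..N}. {b..N})"
    by auto
  have "cubic_eval g w = (\<Sum>m\<in>multisets_of_size {..N} 3. g m * (\<Prod>i\<in>#m. w i))"
  proof (rule cubic_eval_eq_sum)
    show "finite {i. w i \<noteq> 0}"
      using assms by (auto intro: finite_subset[of _ "{..N}"])
    show "finite (multisets_of_size {..N} 3)"
      by (rule finite_multisets_of_size) simp
    show "size m = 3" if "m \<in> multisets_of_size {..N} 3" for m
      using that by (rule multisets_of_size_size)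
    show "m \<in> multisets_of_size {..N} 3" if "m \<in> multisets_of_size {i. w i \<noteq> 0} 3" for m
      using that assms by (auto simp: multisets_of_size_def)
  qed
  also have "\<dots> = (\<Sum>(a, b, c)\<in>(SIGMA a:{..N}. SIGMA b:{a..N}. {b..N}).
      g {#a, b, c#} * (w a * w b * w c))"
    using bij_betw_sorted_triples_multisets_of_size[of "{..N}"]
    by (subst sum.reindex_bij_betw[symmetric]) (auto simp: triples mult.assoc intro!: sum.cong)
  also have "\<dots> = (\<Sum>a\<le>N. \<Sum>b\<in>{a..N}. \<Sum>c\<in>{b..N}. g {#a, b, c#} * (w a * w b * w c))"
    by (simp add: sum.Sigma)
  finally show ?thesis .
qed

lemma cubic_eval_f_inf:
  fixes v :: "nat + nat \<times> nat \<Rightarrow> 'k::comm_ring_1"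
  assumes "finite {x. v x \<noteq> 0}" and "finite P"
    and "\<And>i j. v (Inl i) \<noteq> 0 \<Longrightarrow> v (Inr (i, j)) \<noteq> 0 \<Longrightarrow> (i, j) \<in> P"
  shows "cubic_eval f_inf v = (\<Sum>(i, j)\<in>P. 3 * v (Inl i) * v (Inr (i, j))^2)"
proof -
  define mon :: "nat \<times> nat \<Rightarrow> (nat + nat \<times> nat) multiset"
    where "mon = (\<lambda>(i, j). {#Inl i, Inr (i, j), Inr (i, j)#})"
  have "inj mon"
  proof (rule injI)
    fix p q assume "mon p = mon q"
    then have "set_mset (mon p) = set_mset (mon q)" by simp
    then show "p = q" by (auto simp: mon_def split: prod.splits)
  qed
  have f_inf_mon: "f_inf (mon p) = 3" for p
    by (auto simp: f_inf_def mon_def split: prod.splits)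
  have "cubic_eval f_inf v = (\<Sum>m\<in>mon ` P. f_inf m * (\<Prod>x\<in>#m. v x))"
  proof (rule cubic_eval_eq_sum)
    fix m assume m: "m \<in> multisets_of_size {x. v x \<noteq> 0} 3" and "f_inf m \<noteq> (0::'k)"
    then obtain i j where ij: "m = mon (i, j)"
      by (auto simp: f_inf_def mon_def split: if_splits)
    then have "(i, j) \<in> P"
      using m assms(3) by (auto simp: mon_def multisets_of_size_def)
    then show "m \<in> mon ` P"
      using ij by blast
  qed (use assms(1,2) in \<open>auto simp: mon_def\<close>)
  also have "\<dots> = (\<Sum>p\<in>P. f_inf (mon p) * (\<Prod>x\<in>#mon p. v x))"
    using \<open>inj mon\<close> by (simp add: sum.reindex inj_on_subset)
  also have "\<dots> = (\<Sum>(i, j)\<in>P. 3 * v (Inl i) * v (Inr (i, j))^2)"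
    unfolding f_inf_mon by (rule sum.cong) (auto simp: mon_def power2_eq_square)
  finally show ?thesis .
qed

lemma cubic_embedding_trans:
  assumes "cubic_embedding J g I f \<phi>" and "cubic_embedding I f K h \<psi>"
  shows "cubic_embedding J g K h (\<psi> \<circ> \<phi>)"
  using assms unfolding cubic_embedding_def is_linear_between_def by simp

definition relabel :: "'j set \<Rightarrow> ('j \<Rightarrow> 'i) \<Rightarrow> ('j \<Rightarrow> 'k::zero) \<Rightarrow> 'i \<Rightarrow> 'k" where
  "relabel J e w i = (if i \<in> e ` J then w (inv_into J e i) else 0)"

lemma relabel_image:
  assumes "inj_on e J" and "j \<in> J"
  shows "relabel J e w (e j) = w j"
  using assms by (simp add: relabel_def)

lemma support_relabel:
  assumes "inj_on e J" and "w \<in> fin_vec J"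
  shows "{i. relabel J e w i \<noteq> 0} = e ` {j. w j \<noteq> 0}"
proof
  show "{i. relabel J e w i \<noteq> 0} \<subseteq> e ` {j. w j \<noteq> 0}"
  proof
    fix i assume "i \<in> {i. relabel J e w i \<noteq> 0}"
    then have "i \<in> e ` J" "w (inv_into J e i) \<noteq> 0"
      by (auto simp: relabel_def split: if_splits)
    then show "i \<in> e ` {j. w j \<noteq> 0}"
      by (auto intro: image_eqI[OF f_inv_into_f[symmetric]])
  qed
  show "e ` {j. w j \<noteq> 0} \<subseteq> {i. relabel J e w i \<noteq> 0}"
    using assms by (force simp: relabel_image fin_vec_def)
qed

lemma cubic_eval_relabel:
  fixes g :: "'j multiset \<Rightarrow> 'k::comm_ring_1"
  assumes e: "inj_on e J" and w: "w \<in> fin_vec J"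
  shows "cubic_eval (g \<circ> image_mset (inv_into J e)) (relabel J e w) = cubic_eval g w"
proof -
  define S where "S = {j. w j \<noteq> 0}"
  define D where "D = multisets_of_size S 3"
  have S: "S \<subseteq> J"
    using w by (auto simp: S_def fin_vec_def)
  have supp: "{i. relabel J e w i \<noteq> 0} = e ` S"
    unfolding S_def using e w by (rule support_relabel)
  have D_J: "set_mset m \<subseteq> J" if "m \<in> D" for m
    using that S by (auto simp: D_def multisets_of_size_def)
  have "{m. size m = 3 \<and> set_mset m \<subseteq> e ` S} = image_mset e ` D"
    using multisets_of_size_image[of e S 3]
    by (simp add: D_def multisets_of_size_def conj_commute)
  then have "cubic_eval (g \<circ> image_mset (inv_into J e)) (relabel J e w)
      = (\<Sum>m\<in>image_mset e ` D. (g \<circ> image_mset (inv_into J e)) m * (\<Prod>i\<in>#m. relabel J e w i))"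
    by (simp add: cubic_eval_def supp)
  also have "\<dots> = (\<Sum>m\<in>D. g m * (\<Prod>j\<in>#m. w j))"
  proof (rule sum.reindex_cong)
    show "inj_on (image_mset e) D"
      by (rule inj_on_inverseI[where g = "image_mset (inv_into J e)"])
        (use e D_J image_mset_inv_into_image_mset in blast)
    fix m assume m: "m \<in> D"
    have "(\<Prod>i\<in>#image_mset e m. relabel J e w i) = (\<Prod>j\<in>#m. w j)"
      using D_J[OF m] e
      by (auto simp: multiset.map_comp relabel_image intro!: arg_cong[where f = prod_mset] image_mset_cong)
    then show "(g \<circ> image_mset (inv_into J e)) (image_mset e m) * (\<Prod>i\<in>#image_mset e m. relabel J e w i)
        = g m * (\<Prod>j\<in>#m. w j)"
      using D_J[OF m] e by (simp add: image_mset_inv_into_image_mset)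
  qed simp
  also have "\<dots> = cubic_eval g w"
    by (simp add: cubic_eval_def D_def S_def multisets_of_size_def conj_commute)
  finally show ?thesis .
qed

lemma cubic_embedding_relabel:
  fixes g :: "'j multiset \<Rightarrow> 'k::field"
  assumes "inj_on e J" and "e ` J \<subseteq> I"
  shows "cubic_embedding J g I (g \<circ> image_mset (inv_into J e)) (relabel J e)"
  unfolding cubic_embedding_def is_linear_between_def
proof (intro conjI ballI allI)
  fix w :: "'j \<Rightarrow> 'k" assume w: "w \<in> fin_vec J"
  then have "finite {i. relabel J e w i \<noteq> 0}"
    using assms(1) by (simp add: support_relabel fin_vec_def)
  then show "relabel J e w \<in> fin_vec I"
    using assms(2) by (auto simp: fin_vec_def relabel_def)
  show "cubic_eval (g \<circ> image_mset (inv_into J e)) (relabel J e w) = cubic_eval g w"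
    using assms(1) w by (rule cubic_eval_relabel)
qed (auto simp: relabel_def)

definition linear_form :: "('i \<Rightarrow> 'k) \<Rightarrow> ('i \<Rightarrow> 'k::comm_ring_1) \<Rightarrow> 'k" where
  "linear_form c w = (\<Sum>i | w i \<noteq> 0. c i * w i)"

lemma linear_form_eq_sum:
  assumes "finite T" and "{i. w i \<noteq> 0} \<subseteq> T"
  shows "linear_form c w = (\<Sum>i\<in>T. c i * w i)"
  unfolding linear_form_def using assms by (intro sum.mono_neutral_left) auto

lemma linear_form_add:
  assumes "finite {i. w i \<noteq> 0}" and "finite {i. u i \<noteq> 0}"
  shows "linear_form c (\<lambda>i. w i + u i) = linear_form c w + linear_form c u"
proof -
  let ?T = "{i. w i \<noteq> 0} \<union> {i. u i \<noteq> 0}"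
  have "linear_form c (\<lambda>i. w i + u i) = (\<Sum>i\<in>?T. c i * (w i + u i))"
    using assms by (intro linear_form_eq_sum) auto
  also have "\<dots> = (\<Sum>i\<in>?T. c i * w i) + (\<Sum>i\<in>?T. c i * u i)"
    by (simp add: distrib_left sum.distrib)
  also have "\<dots> = linear_form c w + linear_form c u"
    using assms by (subst (1 2) linear_form_eq_sum[of ?T]) auto
  finally show ?thesis .
qed

lemma linear_form_scale:
  assumes "finite {i. w i \<noteq> 0}"
  shows "linear_form c (\<lambda>i. a * w i) = a * linear_form c w"
proof -
  have "linear_form c (\<lambda>i. a * w i) = (\<Sum>i | w i \<noteq> 0. c i * (a * w i))"
    using assms by (intro linear_form_eq_sum) auto
  then show ?thesis
    by (simp add: linear_form_def sum_distrib_left algebra_simps)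
qed

definition tail_form :: "(nat multiset \<Rightarrow> 'k::field) \<Rightarrow> nat \<Rightarrow> nat \<Rightarrow> (nat \<Rightarrow> 'k) \<Rightarrow> 'k" where
  "tail_form g a b = linear_form (\<lambda>c. if b \<le> c then g {#a, b, c#} / 3 else 0)"

lemma tail_form_eq_sum:
  assumes "\<And>i. w i \<noteq> 0 \<Longrightarrow> i \<le> N"
  shows "tail_form g a b w = (\<Sum>c\<in>{b..N}. g {#a, b, c#} * w c) / 3"
proof -
  have "tail_form g a b w = (\<Sum>c\<le>N. (if b \<le> c then g {#a, b, c#} / 3 else 0) * w c)"
    unfolding tail_form_def using assms by (intro linear_form_eq_sum) auto
  also have "\<dots> = (\<Sum>c\<in>{b..N}. g {#a, b, c#} / 3 * w c)"
    by (rule sum.mono_neutral_cong_right) auto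
  finally show ?thesis
    by (simp add: sum_divide_distrib)
qed

lemma tail_form_add:
  assumes "finite {i. w i \<noteq> 0}" and "finite {i. u i \<noteq> 0}"
  shows "tail_form g a b (\<lambda>i. w i + u i) = tail_form g a b w + tail_form g a b u"
  unfolding tail_form_def using assms by (rule linear_form_add)

lemma tail_form_scale:
  assumes "finite {i. w i \<noteq> 0}"
  shows "tail_form g a b (\<lambda>i. c * w i) = c * tail_form g a b w"
  unfolding tail_form_def using assms by (rule linear_form_scale)

(* The coordinates Inr (a, 2b) and Inr (a, 2b + 1) are the two forms whose squares add up to
   w_b * tail_form g a b w (see sum_squares_embed_V_inf). *)
fun embed_V_inf :: "'k \<Rightarrow> (nat multiset \<Rightarrow> 'k::field) \<Rightarrow> (nat \<Rightarrow> 'k) \<Rightarrow> nat + nat \<times> nat \<Rightarrow> 'k" where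
  "embed_V_inf im g w (Inl a) = w a"
| "embed_V_inf im g w (Inr (a, j)) =
    (if a \<le> j div 2 then
      if even j then (w (j div 2) + tail_form g a (j div 2) w) / 2
      else im * (w (j div 2) - tail_form g a (j div 2) w) / 2
     else 0)"

lemma embed_V_inf_support:
  fixes im :: "'k::field"
  assumes "\<And>i. w i \<noteq> 0 \<Longrightarrow> i \<le> N" and "embed_V_inf im g w v \<noteq> 0"
  shows "v \<in> Inl ` {..N} \<union> Inr ` ({..N} \<times> {..<2 * Suc N})"
proof (cases v)
  case (Inl a)
  then show ?thesis
    using assms by auto
next
  case (Inr p)
  then obtain a j where v: "v = Inr (a, j)"
    by (cases p) auto
  have "j div 2 \<le> N"
  proof (rule ccontr)
    assume "\<not> j div 2 \<le> N"
    moreover have "tail_form g a (j div 2) w = (\<Sum>c\<in>{j div 2..N}. g {#a, j div 2, c#} * w c) / 3"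
      using assms(1) by (rule tail_form_eq_sum)
    ultimately have "w (j div 2) = 0" and "tail_form g a (j div 2) w = 0"
      using assms(1) by auto
    then have "embed_V_inf im g w v = 0"
      unfolding v by simp
    with assms(2) show False ..
  qed
  moreover have "a \<le> j div 2"
    using assms(2) v by (auto split: if_splits)
  ultimately show ?thesis
    using v by auto
qed

lemma finite_support_embed_V_inf:
  fixes im :: "'k::field"
  assumes "\<And>i. w i \<noteq> 0 \<Longrightarrow> i \<le> N"
  shows "finite {v. embed_V_inf im g w v \<noteq> 0}"
proof (rule finite_subset)
  show "{v. embed_V_inf im g w v \<noteq> 0} \<subseteq> Inl ` {..N} \<union> Inr ` ({..N} \<times> {..<2 * Suc N})"
    using embed_V_inf_support[of w N, OF assms] by blast
qed auto

lemma embed_V_inf_add: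
  assumes "finite {i. w i \<noteq> 0}" and "finite {i. u i \<noteq> 0}"
  shows "embed_V_inf im g (\<lambda>i. w i + u i) v = embed_V_inf im g w v + embed_V_inf im g u v"
  by (cases v) (auto simp: tail_form_add[OF assms] add_divide_distrib diff_divide_distrib ring_distribs)

lemma embed_V_inf_scale:
  assumes "finite {i. w i \<noteq> 0}"
  shows "embed_V_inf im g (\<lambda>i. c * w i) v = c * embed_V_inf im g w v"
  by (cases v) (auto simp: tail_form_scale[OF assms] ring_distribs)

lemma sum_squares_embed_V_inf:
  fixes im :: "'k::field"
  assumes "im * im = -1" and "(2::'k) \<noteq> 0"
  shows "(\<Sum>j<2 * Suc N. (embed_V_inf im g w (Inr (a, j)))^2)
    = (\<Sum>b\<in>{a..N}. w b * tail_form g a b w)"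
proof -
  have pair: "(embed_V_inf im g w (Inr (a, 2 * b)))^2 + (embed_V_inf im g w (Inr (a, 2 * b + 1)))^2
      = (if a \<le> b then w b * tail_form g a b w else 0)" for b
    using product_eq_sum_of_two_squares[OF assms] by simp
  have "(\<Sum>j<2 * Suc N. (embed_V_inf im g w (Inr (a, j)))^2)
      = (\<Sum>b<Suc N. if a \<le> b then w b * tail_form g a b w else 0)"
    unfolding sum_lessThan_double pair ..
  also have "\<dots> = (\<Sum>b\<in>{b\<in>{..<Suc N}. a \<le> b}. w b * tail_form g a b w)"
    by (rule sum.inter_filter[symmetric]) simp
  also have "{b\<in>{..<Suc N}. a \<le> b} = {a..N}"
    by auto
  finally show ?thesis .
qed

lemma cubic_eval_embed_V_inf:
  fixes g :: "nat multiset \<Rightarrow> 'k::field"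
  assumes im: "im * im = -1" and two: "(2::'k) \<noteq> 0" and three: "(3::'k) \<noteq> 0"
    and N: "\<And>i. w i \<noteq> 0 \<Longrightarrow> i \<le> N"
  shows "cubic_eval f_inf (embed_V_inf im g w) = cubic_eval g w"
proof -
  let ?v = "embed_V_inf im g w"
  have "cubic_eval f_inf ?v = (\<Sum>(a, j)\<in>{..N} \<times> {..<2 * Suc N}. 3 * ?v (Inl a) * ?v (Inr (a, j))^2)"
  proof (rule cubic_eval_f_inf)
    show "finite {x. ?v x \<noteq> 0}"
      using N by (rule finite_support_embed_V_inf)
    show "(a, j) \<in> {..N} \<times> {..<2 * Suc N}" if "?v (Inr (a, j)) \<noteq> 0" for a j
      using embed_V_inf_support[of w N, OF N that] by auto
  qed simp
  also have "\<dots> = (\<Sum>a\<le>N. 3 * w a * (\<Sum>j<2 * Suc N. ?v (Inr (a, j))^2))"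
    unfolding sum.cartesian_product[symmetric] embed_V_inf.simps(1) sum_distrib_left ..
  also have "\<dots> = (\<Sum>a\<le>N. 3 * w a * (\<Sum>b\<in>{a..N}. w b * tail_form g a b w))"
    unfolding sum_squares_embed_V_inf[OF im two] ..
  also have "\<dots> = (\<Sum>a\<le>N. \<Sum>b\<in>{a..N}. \<Sum>c\<in>{b..N}. g {#a, b, c#} * (w a * w b * w c))"
    using three by (simp add: tail_form_eq_sum[OF N] sum_distrib_left sum_divide_distrib field_simps)
  also have "\<dots> = cubic_eval g w"
    by (rule cubic_eval_nat[OF N, symmetric])
  finally show ?thesis .
qed

lemma cubic_embedding_embed_V_inf:
  fixes g :: "nat multiset \<Rightarrow> 'k::field"
  assumes "im * im = -1" and "(2::'k) \<noteq> 0" and "(3::'k) \<noteq> 0"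
  shows "cubic_embedding UNIV g UNIV f_inf (embed_V_inf im g)"
  unfolding cubic_embedding_def is_linear_between_def
proof (intro conjI ballI allI)
  fix w :: "nat \<Rightarrow> 'k" assume "w \<in> fin_vec UNIV"
  then obtain N where N: "\<And>i. w i \<noteq> 0 \<Longrightarrow> i \<le> N"
    by (auto simp: fin_vec_def finite_nat_set_iff_bounded_le)
  show "embed_V_inf im g w \<in> fin_vec UNIV"
    using finite_support_embed_V_inf[of w N, OF N] by (simp add: fin_vec_def)
  show "cubic_eval f_inf (embed_V_inf im g w) = cubic_eval g w"
    using assms N by (rule cubic_eval_embed_V_inf)
next
  fix w u :: "nat \<Rightarrow> 'k" assume "w \<in> fin_vec UNIV" "u \<in> fin_vec UNIV"
  then show "embed_V_inf im g (\<lambda>i. w i + u i) = (\<lambda>v. embed_V_inf im g w v + embed_V_inf im g u v)"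
    by (simp add: fin_vec_def embed_V_inf_add fun_eq_iff)
next
  fix c :: 'k and w :: "nat \<Rightarrow> 'k" assume "w \<in> fin_vec UNIV"
  then show "embed_V_inf im g (\<lambda>i. c * w i) = (\<lambda>v. c * embed_V_inf im g w v)"
    by (simp add: fin_vec_def embed_V_inf_scale fun_eq_iff)
qed

theorem lemma4p3:
  fixes J :: "'j set" and g :: "'j multiset \<Rightarrow> 'k::field"
  assumes "alg_closed TYPE('k)"
    and "(2::'k) \<noteq> 0" and "(3::'k) \<noteq> 0"
    and "countable J"
  shows "\<exists>\<phi>. cubic_embedding J g (UNIV :: (nat + nat \<times> nat) set) f_inf \<phi>"
proof -
  obtain im :: 'k where im: "im * im = -1"
    using alg_closed_ex_square_root[OF assms(1)] by blast
  let ?e = "to_nat_on J"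
  let ?g = "g \<circ> image_mset (inv_into J ?e)"
  have "cubic_embedding J g UNIV ?g (relabel J ?e)"
    using assms(4) by (intro cubic_embedding_relabel) auto
  moreover have "cubic_embedding UNIV ?g UNIV f_inf (embed_V_inf im ?g)"
    using im assms(2,3) by (rule cubic_embedding_embed_V_inf)
  ultimately show ?thesis
    by (blast intro: cubic_embedding_trans)
qed

end
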